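(* Let $\boldsymbol{N}\in\mathbb{R}^3$ with $\|\boldsymbol{N}\|=1$ and $\boldsymbol{G}^{\mathrm{ti}}=\boldsymbol{N}\otimes\boldsymbol{N}$. For $\boldsymbol{F}\in\mathrm{GL}^+(3)$ let $\boldsymbol{H}=\operatorname{cof}\boldsymbol{F}=(\det\boldsymbol{F})\boldsymbol{F}^{-T}$. Then the functions $$I_4^{\mathrm{ti}}(\boldsymbol{F})=\|\boldsymbol{F}\|^2-\|\boldsymbol{F}\boldsymbol{G}^{\mathrm{ti}}\|^2,\qquad I_5^{\mathrm{ti}}(\boldsymbol{F})=\|\boldsymbol{H}\|^2-\|\boldsymbol{H}\boldsymbol{G}^{\mathrm{ti}}\|^2$$ are twice continuously differentiable and polyconvex.
   Context: $\|\cdot\|$ is the Frobenius norm and $\mathrm{GL}^+(3)$ is the set of real $3\times3$ matrices with positive determinant. A function $W$ of $\boldsymbol{F}$ is polyconvex if it admits a representation $W(\boldsymbol{F})=\mathcal{P}(\boldsymbol{F},\operatorname{cof}\boldsymbol{F},\det\boldsymbol{F})$ with $\mathcal{P}$ convex in its arguments. *)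

theory Defs
  imports "HOL-Analysis.Analysis"
begin

text \<open>GL+(3): real 3x3 matrices with positive determinant.
  Note: the norm on real^3^3 is the Frobenius norm.\<close>
definition GLp3 :: "(real^3^3) set" where
  "GLp3 = {F. det F > 0}"

definition cof :: "real^3^3 \<Rightarrow> real^3^3" where
  "cof F = det F *\<^sub>R transpose (matrix_inv F)"

definition dyad :: "real^3 \<Rightarrow> real^3 \<Rightarrow> real^3^3" where
  "dyad a b = (\<chi> i j. a $ i * b $ j)"

definition C2_on :: "('a::real_normed_vector \<Rightarrow> real) \<Rightarrow> 'a set \<Rightarrow> bool" where
  "C2_on f S \<longleftrightarrow> (\<exists>(f' :: 'a \<Rightarrow> ('a \<Rightarrow>\<^sub>L real)) (f'' :: 'a \<Rightarrow> ('a \<Rightarrow>\<^sub>L ('a \<Rightarrow>\<^sub>L real))).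
      (\<forall>x\<in>S. (f has_derivative blinfun_apply (f' x)) (at x)) \<and>
      (\<forall>x\<in>S. (f' has_derivative blinfun_apply (f'' x)) (at x)) \<and>
      continuous_on S f'')"

definition polyconvex :: "(real^3^3 \<Rightarrow> real) \<Rightarrow> bool" where
  "polyconvex W \<longleftrightarrow> (\<exists>P :: (real^3^3) \<times> (real^3^3) \<times> real \<Rightarrow> real.
      convex_on (UNIV \<times> UNIV \<times> {0<..}) P \<and>
      (\<forall>F\<in>GLp3. W F = P (F, cof F, det F)))"

end

theory Submission
  imports Defs
begin

(*
  G = N \<otimes> N acts on each row of a matrix as the orthogonal projection onto N, so by Pythagoras
  Q(H) = |H|^2 - |HG|^2 = |H - HG|^2 is the squared norm of a linear function of H and hence
  convex.  Since I4 = Q and I5 = Q \<circ> cof, both are polyconvex.  On GL+(3) the cofactor matrix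
  (det F) F^-T coincides with the matrix of signed 2x2 minors of F, which is polynomial in F; so
  I4 and I5 agree on the open set GL+(3) with polynomials and are therefore C^2.
*)

lemma real_polynomial_function_has_partial_derivatives:
  fixes f :: "'a::euclidean_space \<Rightarrow> real"
  assumes "real_polynomial_function f"
  shows "\<exists>D. (\<forall>b. real_polynomial_function (D b)) \<and>
    (\<forall>x. (f has_derivative (\<lambda>h. \<Sum>b\<in>Basis. (h \<bullet> b) * D b x)) (at x))"
  using assms
proof (induction rule: real_polynomial_function.induct)
  case (linear f)
  have "f h = (\<Sum>b\<in>Basis. (h \<bullet> b) * f b)" for h
    using Linear_Algebra.linear_componentwise[OF bounded_linear.linear[OF linear], of h 1]
    by simp
  then have "(f has_derivative (\<lambda>h. \<Sum>b\<in>Basis. (h \<bullet> b) * f b)) (at x)" for x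
    by (intro has_derivative_eq_rhs[OF bounded_linear_imp_has_derivative[OF linear]] ext)
  then show ?case
    by (intro exI[of _ "\<lambda>b x. f b"]) auto
next
  case (const c)
  show ?case
    by (rule exI[of _ "\<lambda>b x. 0"]) (auto intro: derivative_eq_intros)
next
  case (add f g)
  then obtain Df Dg where
    "\<forall>b. real_polynomial_function (Df b)" "\<forall>b. real_polynomial_function (Dg b)"
    "\<And>x. (f has_derivative (\<lambda>h. \<Sum>b\<in>Basis. (h \<bullet> b) * Df b x)) (at x)"
    "\<And>x. (g has_derivative (\<lambda>h. \<Sum>b\<in>Basis. (h \<bullet> b) * Dg b x)) (at x)"
    by blast
  then show ?case
    by (intro exI[of _ "\<lambda>b x. Df b x + Dg b x"] conjI allI real_polynomial_function.intros(3)
        has_derivative_eq_rhs[OF has_derivative_add])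
      (auto simp: algebra_simps sum.distrib)
next
  case (mult f g)
  then obtain Df Dg where
    "\<forall>b. real_polynomial_function (Df b)" "\<forall>b. real_polynomial_function (Dg b)"
    "\<And>x. (f has_derivative (\<lambda>h. \<Sum>b\<in>Basis. (h \<bullet> b) * Df b x)) (at x)"
    "\<And>x. (g has_derivative (\<lambda>h. \<Sum>b\<in>Basis. (h \<bullet> b) * Dg b x)) (at x)"
    by blast
  with mult.hyps show ?case
    by (intro exI[of _ "\<lambda>b x. f x * Dg b x + Df b x * g x"] conjI allI
        real_polynomial_function.intros(3,4)
        has_derivative_eq_rhs[OF has_derivative_mult])
      (auto simp: algebra_simps sum.distrib sum_distrib_left)
qed

lemma C2_on_real_polynomial_function:
  fixes f :: "'a::euclidean_space \<Rightarrow> real"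
  assumes "real_polynomial_function f"
  shows "C2_on f S"
proof -
  obtain D where D: "\<And>b. real_polynomial_function (D b)"
    and f_deriv: "\<And>x. (f has_derivative (\<lambda>h. \<Sum>b\<in>Basis. (h \<bullet> b) * D b x)) (at x)"
    using real_polynomial_function_has_partial_derivatives[OF assms] by blast
  obtain D2 where D2: "\<And>b c. real_polynomial_function (D2 b c)"
    and D_deriv: "\<And>b x. (D b has_derivative (\<lambda>h. \<Sum>c\<in>Basis. (h \<bullet> c) * D2 b c x)) (at x)"
    using real_polynomial_function_has_partial_derivatives[OF D] by metis
  define f' where "f' x = (\<Sum>b\<in>Basis. D b x *\<^sub>R blinfun_inner_left b)" for x
  define f'' where "f'' x = (\<Sum>b\<in>Basis. \<Sum>c\<in>Basis. D2 b c x *\<^sub>R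
      (blinfun_scaleR_left (blinfun_inner_left b) o\<^sub>L blinfun_inner_left c))" for x
  have f'_apply: "blinfun_apply (f' x) = (\<lambda>h. \<Sum>b\<in>Basis. (h \<bullet> b) * D b x)" for x
    by (rule ext) (simp add: f'_def blinfun.sum_left blinfun.scaleR_left mult.commute)
  have f''_apply: "blinfun_apply (f'' x) =
      (\<lambda>h. \<Sum>b\<in>Basis. (\<Sum>c\<in>Basis. (h \<bullet> c) * D2 b c x) *\<^sub>R blinfun_inner_left b)" for x
    by (rule ext) (simp add: f''_def blinfun.sum_left blinfun.scaleR_left scaleR_sum_left mult.commute)
  have "(f has_derivative blinfun_apply (f' x)) (at x)" for x
    unfolding f'_apply by (rule f_deriv)
  moreover have "(f' has_derivative blinfun_apply (f'' x)) (at x)" for x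
    unfolding f''_apply f'_def
    by (intro has_derivative_sum has_derivative_scaleR_left D_deriv)
  moreover have "continuous_on S f''"
    unfolding f''_def
    by (intro continuous_on_sum continuous_on_scaleR continuous_on_const
        continuous_at_imp_continuous_on ballI continuous_real_polymonial_function D2)
  ultimately show ?thesis
    unfolding C2_on_def by blast
qed

lemma C2_on_transform_open:
  assumes "C2_on g S" "open S" "\<And>x. x \<in> S \<Longrightarrow> f x = g x"
  shows "C2_on f S"
  using assms has_derivative_transform_within_open unfolding C2_on_def by metis

lemma polynomial_function_vec_lambda:
  fixes f :: "'a::real_normed_vector \<Rightarrow> 'i::finite \<Rightarrow> 'b::euclidean_space"
  assumes "\<And>i. polynomial_function (\<lambda>x. f x i)"
  shows "polynomial_function (\<lambda>x. \<chi> i. f x i)"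
proof -
  have "real_polynomial_function (\<lambda>x. (\<chi> i. f x i) \<bullet> b)" if "b \<in> Basis" for b
  proof -
    obtain i u where "u \<in> Basis" "b = axis i u"
      using \<open>b \<in> Basis\<close> by (auto simp: Basis_vec_def)
    moreover have "real_polynomial_function (\<lambda>x. f x i \<bullet> u)"
      using assms[of i, unfolded polynomial_function_iff_Basis_inner] \<open>u \<in> Basis\<close> by blast
    ultimately show ?thesis
      by (simp add: inner_axis)
  qed
  then show ?thesis
    by (simp add: polynomial_function_iff_Basis_inner)
qed

lemma real_polynomial_function_power2_norm:
  fixes f :: "'a::real_normed_vector \<Rightarrow> 'b::euclidean_space"
  assumes "polynomial_function f"
  shows "real_polynomial_function (\<lambda>x. (norm (f x))\<^sup>2)"
proof -
  have "(norm (f x))\<^sup>2 = (\<Sum>b\<in>Basis. (f x \<bullet> b) * (f x \<bullet> b))" for x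
    unfolding power2_norm_eq_inner by (rule euclidean_inner)
  moreover have "real_polynomial_function (\<lambda>x. f x \<bullet> b)" if "b \<in> Basis" for b
    using assms that polynomial_function_iff_Basis_inner by blast
  ultimately show ?thesis
    by (simp add: real_polynomial_function_sum real_polynomial_function.intros(4))
qed

lemma real_polynomial_function_matrix_entry:
  "real_polynomial_function (\<lambda>A::real^'n^'m. A $ i $ j)"
  by (intro real_polynomial_function.intros(1) bounded_linear_compose[OF bounded_linear_vec_nth]
      bounded_linear_vec_nth)

lemma real_polynomial_function_det: "real_polynomial_function (\<lambda>A::real^'n^'n. det A)"
  unfolding det_def
  by (intro real_polynomial_function_sum real_polynomial_function_prod
      real_polynomial_function.intros(2,4) real_polynomial_function_matrix_entry finite)

lemma open_GLp3: "open GLp3"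
  unfolding GLp3_def
  by (intro open_Collect_less continuous_on_const continuous_at_imp_continuous_on ballI
      continuous_real_polymonial_function real_polynomial_function_det)

text \<open>Indices live in \<open>\<int>/3\<close>, so \<open>i+1\<close> and \<open>i+2\<close> are the other two indices in cyclic order and
  the cyclic \<open>2\<times>2\<close> minors already carry the cofactor signs.\<close>
definition cofactor3 :: "'a::comm_ring_1^3^3 \<Rightarrow> 'a^3^3" where
  "cofactor3 A = (\<chi> i j. A$(i+1)$(j+1) * A$(i+2)$(j+2) - A$(i+1)$(j+2) * A$(i+2)$(j+1))"

lemma matrix_mul_transpose_cofactor3: "A ** transpose (cofactor3 A) = mat (det A)"
proof -
  have cyclic: "(1::3) + 1 = 2" "(1::3) + 2 = 3" "(2::3) + 1 = 3" "(2::3) + 2 = 1"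
    "(3::3) + 1 = 1" "(3::3) + 2 = 2" "(4::3) = 1" "(5::3) = 2"
    by simp_all
  show ?thesis
    unfolding vec_eq_iff forall_3
    by (simp add: matrix_matrix_mult_def transpose_def cofactor3_def sum_3 det_3 mat_def cyclic
        algebra_simps)
qed

lemma matrix_inv_unique:
  fixes A B :: "'a::field^'n^'n"
  assumes "A ** B = mat 1"
  shows "matrix_inv A = B"
proof -
  have "B ** A = mat 1"
    using assms matrix_left_right_inverse by blast
  then have left_inverse: "matrix_inv A ** A = mat 1"
    unfolding matrix_inv_def
    using someI[of "\<lambda>A'. A ** A' = mat 1 \<and> A' ** A = mat 1" B] assms by blast
  have "matrix_inv A = (matrix_inv A ** A) ** B"
    using assms by (simp add: matrix_mul_assoc[symmetric])
  then show ?thesis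
    using left_inverse by simp
qed

lemma cof_eq_cofactor3:
  assumes "det F \<noteq> 0"
  shows "cof F = cofactor3 F"
proof -
  have "F ** ((1 / det F) *\<^sub>R transpose (cofactor3 F)) = (1 / det F) *\<^sub>R mat (det F)"
    by (simp add: matrix_scalar_ac scalar_matrix_assoc[symmetric] matrix_mul_transpose_cofactor3)
  also have "\<dots> = mat 1"
    using assms by (simp add: vec_eq_iff mat_def)
  finally show ?thesis
    using assms by (simp add: cof_def matrix_inv_unique transpose_scalar)
qed

lemma polynomial_function_cofactor3: "polynomial_function (cofactor3 :: real^3^3 \<Rightarrow> real^3^3)"
  unfolding cofactor3_def
  by (intro polynomial_function_vec_lambda, unfold real_polynomial_function_eq[symmetric])
    (intro real_polynomial_function_diff real_polynomial_function.intros(4)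
      real_polynomial_function_matrix_entry)

lemma matrix_mult_dyad_row: "(A ** dyad N N) $ i = (A $ i \<bullet> N) *\<^sub>R N"
  by (auto simp: vec_eq_iff matrix_matrix_mult_def dyad_def inner_vec_def sum_distrib_left mult_ac)

lemma power2_norm_diff_mult_dyad:
  fixes A :: "real^3^'m"
  assumes "norm N = 1"
  shows "(norm (A - A ** dyad N N))\<^sup>2 = (norm A)\<^sup>2 - (norm (A ** dyad N N))\<^sup>2"
proof -
  have "N \<bullet> N = 1"
    using assms by (simp add: dot_square_norm)
  then have row: "(norm (r - (r \<bullet> N) *\<^sub>R N))\<^sup>2 = (norm r)\<^sup>2 - (norm ((r \<bullet> N) *\<^sub>R N))\<^sup>2"
    for r :: "real^3"
    by (simp only: power2_norm_eq_inner)
      (simp add: inner_commute algebra_simps)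
  have rows: "(norm M)\<^sup>2 = (\<Sum>i\<in>UNIV. (norm (M $ i))\<^sup>2)" for M :: "real^3^'m"
    by (simp add: power2_norm_eq_inner inner_vec_def)
  show ?thesis
    unfolding rows sum_subtractf[symmetric] vector_minus_component matrix_mult_dyad_row row ..
qed

lemma bounded_linear_matrix_mult_right: "bounded_linear (\<lambda>A::real^'n^'m. A ** B)"
  unfolding linear_conv_bounded_linear[symmetric]
  by (rule linearI)
    (simp_all add: vec_eq_iff matrix_matrix_mult_def sum.distrib sum_distrib_left algebra_simps)

lemma convex_on_power2_norm: "convex_on UNIV (\<lambda>x::'a::real_normed_vector. (norm x)\<^sup>2)"
proof (rule convex_onI)
  fix t :: real and x y :: 'a
  assume t: "0 < t" "t < 1"
  have "norm ((1 - t) *\<^sub>R x + t *\<^sub>R y) \<le> (1 - t) * norm x + t * norm y"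
    using t norm_triangle_ineq[of "(1 - t) *\<^sub>R x" "t *\<^sub>R y"] by simp
  then have "(norm ((1 - t) *\<^sub>R x + t *\<^sub>R y))\<^sup>2 \<le> ((1 - t) * norm x + t * norm y)\<^sup>2"
    by (simp add: power_mono)
  also have "\<dots> \<le> (1 - t) * (norm x)\<^sup>2 + t * (norm y)\<^sup>2"
    using convex_onD[OF convex_power2, of t "norm x" "norm y"] t by simp
  finally show "(norm ((1 - t) *\<^sub>R x + t *\<^sub>R y))\<^sup>2 \<le> (1 - t) * (norm x)\<^sup>2 + t * (norm y)\<^sup>2" .
qed simp

lemma convex_on_compose_linear:
  assumes "convex_on UNIV f" "linear g" "convex S"
  shows "convex_on S (\<lambda>x. f (g x))"
  using assms unfolding convex_on_def by (simp add: linear_add linear_scale)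

lemma polyconvexI:
  assumes "convex_on UNIV P" "\<And>F. F \<in> GLp3 \<Longrightarrow> W F = P (F, cof F, det F)"
  shows "polyconvex W"
  unfolding polyconvex_def
proof (intro exI[of _ P] conjI ballI)
  show "convex_on (UNIV \<times> UNIV \<times> {0<..}) P"
    by (rule convex_on_subset[OF assms(1) subset_UNIV])
      (intro convex_Times convex_UNIV convex_real_interval)
qed (rule assms(2))

lemma convex_on_imp_polyconvex:
  assumes "convex_on UNIV W"
  shows "polyconvex W"
proof (rule polyconvexI)
  have "linear (\<lambda>p::(real^3^3) \<times> (real^3^3) \<times> real. fst p)"
    by (rule bounded_linear.linear[OF bounded_linear_fst])
  then show "convex_on UNIV (\<lambda>p::(real^3^3) \<times> (real^3^3) \<times> real. W (fst p))"
    by (rule convex_on_compose_linear[OF assms _ convex_UNIV])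
qed simp

lemma convex_on_imp_polyconvex_cof:
  assumes "convex_on UNIV Q"
  shows "polyconvex (\<lambda>F. Q (cof F))"
proof (rule polyconvexI)
  have "linear (\<lambda>p::(real^3^3) \<times> (real^3^3) \<times> real. fst (snd p))"
    by (intro bounded_linear.linear bounded_linear_fst_comp bounded_linear_snd)
  then show "convex_on UNIV (\<lambda>p::(real^3^3) \<times> (real^3^3) \<times> real. Q (fst (snd p)))"
    by (rule convex_on_compose_linear[OF assms _ convex_UNIV])
qed simp

lemma C2_on_comp_cof:
  assumes "real_polynomial_function Q"
  shows "C2_on (\<lambda>F. Q (cof F)) GLp3"
proof (rule C2_on_transform_open[OF _ open_GLp3])
  show "C2_on (Q \<circ> cofactor3) GLp3"
    by (intro C2_on_real_polynomial_function real_polynomial_function_compose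
        polynomial_function_cofactor3 assms)
  show "Q (cof F) = (Q \<circ> cofactor3) F" if "F \<in> GLp3" for F
    using that by (simp add: GLp3_def cof_eq_cofactor3)
qed

theorem corollary1:
  fixes N :: "real^3"
  assumes "norm N = 1"
  defines "G \<equiv> dyad N N"
  defines "I4 \<equiv> (\<lambda>F. (norm F)\<^sup>2 - (norm (F ** G))\<^sup>2)"
  defines "I5 \<equiv> (\<lambda>F. (norm (cof F))\<^sup>2 - (norm (cof F ** G))\<^sup>2)"
  shows "C2_on I4 GLp3 \<and> C2_on I5 GLp3 \<and> polyconvex I4 \<and> polyconvex I5"
proof -
  define Q where "Q H = (norm (H - H ** G))\<^sup>2" for H :: "real^3^3"
  have I4_eq: "I4 = Q" and I5_eq: "I5 = (\<lambda>F. Q (cof F))"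
    by (simp_all add: fun_eq_iff I4_def I5_def Q_def G_def power2_norm_diff_mult_dyad[OF assms(1)])
  have L: "bounded_linear (\<lambda>H::real^3^3. H - H ** G)"
    by (intro bounded_linear_sub bounded_linear_ident bounded_linear_matrix_mult_right)
  then have "real_polynomial_function Q"
    unfolding Q_def by (intro real_polynomial_function_power2_norm polynomial_function_bounded_linear)
  moreover have "convex_on UNIV Q"
    unfolding Q_def
    by (rule convex_on_compose_linear[OF convex_on_power2_norm bounded_linear.linear[OF L] convex_UNIV])
  ultimately show ?thesis
    unfolding I4_eq I5_eq
    by (simp add: C2_on_real_polynomial_function C2_on_comp_cof convex_on_imp_polyconvex
        convex_on_imp_polyconvex_cof)
qed

end
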